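(* Let $(M,\circ,\mathrm{OR})$ be a free $\mathbb{D}$-module of rank 3 with scalar product and orientation, and let $z_1,z_2\in M\setminus\epsilon M$. Then $z_1$ and $z_2$ are proportional (i.e. $z_1=\lambda z_2$ for some $\lambda\in\mathbb{D}$) if and only if $z_1\times z_2=0$.
   Context: $\mathbb{D}=\{a+\epsilon b: a,b\in\mathbb{R}\}$, $\epsilon^2=0$. Scalar product: symmetric $\mathbb{D}$-bilinear $\circ:M\times M\to\mathbb{D}$ with $\mathfrak{Re}(x\circ x)\ge0$, equality iff $x\in\epsilon M$; orientation: one of the two classes of ordered bases under $\{b'_j=A_{jk}b_k\}\sim\{b_k\}$ iff $\det\mathfrak{Re}(A)>0$. Cross product: $x\times y=x^iy^j\epsilon_{ijk}m_k$ where $x=x^im_i$, $y=y^im_i$ in any positive orthonormal basis $\{m_i\}$ ($m_i\circ m_j=\delta_{ij}$). *)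

theory Defs
  imports Complex_Main "HOL-Library.Numeral_Type"
begin

datatype dual = Dual (dre: real) (deps: real)

instantiation dual :: comm_ring_1
begin
definition "zero_dual = Dual 0 0"
definition "one_dual = Dual 1 0"
definition "plus_dual x y = Dual (dre x + dre y) (deps x + deps y)"
definition "minus_dual x y = Dual (dre x - dre y) (deps x - deps y)"
definition "uminus_dual x = Dual (- dre x) (- deps x)"
definition "times_dual x y = Dual (dre x * dre y) (dre x * deps y + deps x * dre y)"
instance
  by standard (auto simp: zero_dual_def one_dual_def plus_dual_def minus_dual_def
      uminus_dual_def times_dual_def algebra_simps intro: dual.expand)
end

definition deps_unit :: dual ("\<epsilon>\<^sub>D") where "\<epsilon>\<^sub>D = Dual 0 1"

definition eps_part :: "(dual \<Rightarrow> 'm \<Rightarrow> 'm) \<Rightarrow> 'm set" where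
  "eps_part sc = {sc \<epsilon>\<^sub>D y | y. True}"

definition dual_basis :: "(dual \<Rightarrow> 'm::comm_monoid_add \<Rightarrow> 'm) \<Rightarrow> (3 \<Rightarrow> 'm) \<Rightarrow> bool" where
  "dual_basis sc b \<longleftrightarrow> (\<forall>x. \<exists>!c::3 \<Rightarrow> dual. x = (\<Sum>i\<in>UNIV. sc (c i) (b i)))"

definition coords :: "(dual \<Rightarrow> 'm::comm_monoid_add \<Rightarrow> 'm) \<Rightarrow> (3 \<Rightarrow> 'm) \<Rightarrow> 'm \<Rightarrow> 3 \<Rightarrow> dual" where
  "coords sc b x = (THE c. x = (\<Sum>i\<in>UNIV. sc (c i) (b i)))"

definition det3 :: "(3 \<Rightarrow> 3 \<Rightarrow> real) \<Rightarrow> real" where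
  "det3 A = A 0 0 * (A 1 1 * A 2 2 - A 1 2 * A 2 1)
          - A 0 1 * (A 1 0 * A 2 2 - A 1 2 * A 2 0)
          + A 0 2 * (A 1 0 * A 2 1 - A 1 1 * A 2 0)"

definition same_orientation :: "(dual \<Rightarrow> 'm::comm_monoid_add \<Rightarrow> 'm) \<Rightarrow> (3 \<Rightarrow> 'm) \<Rightarrow> (3 \<Rightarrow> 'm) \<Rightarrow> bool" where
  "same_orientation sc b' b \<longleftrightarrow>
     (\<exists>A::3 \<Rightarrow> 3 \<Rightarrow> dual. (\<forall>j. b' j = (\<Sum>k\<in>UNIV. sc (A j k) (b k))) \<and> det3 (\<lambda>j k. dre (A j k)) > 0)"

definition is_orientation :: "(dual \<Rightarrow> 'm::comm_monoid_add \<Rightarrow> 'm) \<Rightarrow> (3 \<Rightarrow> 'm) set \<Rightarrow> bool" where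
  "is_orientation sc OR \<longleftrightarrow>
     (\<exists>b. dual_basis sc b \<and> OR = {b'. dual_basis sc b' \<and> same_orientation sc b' b})"

definition scalar_product :: "(dual \<Rightarrow> 'm::ab_group_add \<Rightarrow> 'm) \<Rightarrow> ('m \<Rightarrow> 'm \<Rightarrow> dual) \<Rightarrow> bool" where
  "scalar_product sc sp \<longleftrightarrow>
     (\<forall>x y. sp x y = sp y x) \<and>
     (\<forall>x y z. sp (x + y) z = sp x z + sp y z) \<and>
     (\<forall>a x y. sp (sc a x) y = a * sp x y) \<and>
     (\<forall>x. dre (sp x x) \<ge> 0) \<and>
     (\<forall>x. dre (sp x x) = 0 \<longleftrightarrow> x \<in> eps_part sc)"

definition pos_orthonormal_basis ::
  "(dual \<Rightarrow> 'm::comm_monoid_add \<Rightarrow> 'm) \<Rightarrow> ('m \<Rightarrow> 'm \<Rightarrow> dual) \<Rightarrow> (3 \<Rightarrow> 'm) set \<Rightarrow> (3 \<Rightarrow> 'm) \<Rightarrow> bool" where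
  "pos_orthonormal_basis sc sp OR m \<longleftrightarrow>
     dual_basis sc m \<and> m \<in> OR \<and> (\<forall>i j. sp (m i) (m j) = (if i = j then 1 else 0))"

text \<open>Cross product x \<times> y = x^i y^j eps_ijk m_k in a positive orthonormal basis m
  (Levi-Civita sum written out).\<close>
definition cross_prod ::
  "(dual \<Rightarrow> 'm::comm_monoid_add \<Rightarrow> 'm) \<Rightarrow> ('m \<Rightarrow> 'm \<Rightarrow> dual) \<Rightarrow> (3 \<Rightarrow> 'm) set \<Rightarrow> 'm \<Rightarrow> 'm \<Rightarrow> 'm" where
  "cross_prod sc sp OR x y =
    (let m = (SOME m. pos_orthonormal_basis sc sp OR m);
         u = coords sc m x; v = coords sc m y
     in sc (u 1 * v 2 - u 2 * v 1) (m 0) + sc (u 2 * v 0 - u 0 * v 2) (m 1)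
        + sc (u 0 * v 1 - u 1 * v 0) (m 2))"

end

theory Submission
  imports Defs
begin

text \<open>Every vector w outside \<epsilon>M has w \<circ> w with positive real part, and such a dual
  number has an inverse square root; hence Gram-Schmidt works over the dual numbers. Applied
  to a basis of the orientation class it yields an orthonormal basis related to it by a
  triangular matrix whose diagonal has positive real parts, so a positive orthonormal basis
  exists and the cross product is computed in a genuine basis. In its coordinates u, v the
  cross product vanishes iff all 2x2 minors u_i v_j - u_j v_i vanish; as z2 is not in \<epsilon>M,
  some v_k is a unit, and then the minors vanish iff u = (u_k / v_k) v.\<close>


lemma three_exhaust: "(i::3) = 0 \<or> i = 1 \<or> i = 2"
proof (induct i)
  case (of_int z)
  then have "z = 0 \<or> z = 1 \<or> z = 2" by fastforce
  then show ?case by auto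
qed

lemma UNIV_three: "(UNIV::3 set) = {0, 1, 2}"
  using three_exhaust by auto

lemma all_three_iff: "(\<forall>i::3. P i) \<longleftrightarrow> P 0 \<and> P 1 \<and> P 2"
  by (metis three_exhaust)

lemma sum_UNIV_three: "sum f (UNIV::3 set) = f 0 + f 1 + f 2"
  unfolding UNIV_three by (simp add: ac_simps)

lemma det3_lower_triangular:
  "A 0 1 = 0 \<Longrightarrow> A 0 2 = 0 \<Longrightarrow> A 1 2 = 0 \<Longrightarrow> det3 A = A 0 0 * A 1 1 * A 2 2"
  by (simp add: det3_def)

lemma dual_eq_iff: "x = y \<longleftrightarrow> dre x = dre y \<and> deps x = deps y"
  by (cases x; cases y) auto

lemma dual_simps [simp]:
  "dre 0 = 0" "deps 0 = 0" "dre 1 = 1" "deps 1 = 0"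
  "dre (x + y) = dre x + dre y" "deps (x + y) = deps x + deps y"
  "dre (x - y) = dre x - dre y" "deps (x - y) = deps x - deps y"
  "dre (- x) = - dre x" "deps (- x) = - deps x"
  "dre (x * y) = dre x * dre y" "deps (x * y) = dre x * deps y + deps x * dre y"
  "dre \<epsilon>\<^sub>D = 0" "deps \<epsilon>\<^sub>D = 1"
  by (simp_all add: zero_dual_def one_dual_def plus_dual_def minus_dual_def
      uminus_dual_def times_dual_def deps_unit_def)

lemma dual_dvd_one_iff: "x dvd 1 \<longleftrightarrow> dre x \<noteq> 0"
proof
  assume "x dvd 1"
  then obtain y where "1 = x * y" by (rule dvdE)
  then have "dre x * dre y = 1" by (metis dual_simps(3,11))
  then show "dre x \<noteq> 0" by auto
next
  assume "dre x \<noteq> 0"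
  then have "x * Dual (1 / dre x) (- deps x / (dre x)\<^sup>2) = 1"
    by (simp add: dual_eq_iff field_simps power2_eq_square)
  then show "x dvd 1" by (metis dvd_triv_left)
qed

text \<open>With a = dre x and b = deps x, the witness is
  (a + \<epsilon> b)^(-1/2) = a^(-1/2) - \<epsilon> b / (2 a^(3/2)).\<close>
lemma dual_inverse_sqrt_exists:
  assumes "dre x > 0"
  shows "\<exists>d. d * d * x = 1 \<and> dre d > 0"
proof -
  define s where "s = sqrt (dre x)"
  have s: "s > 0" "s * s = dre x"
    using assms by (simp_all add: s_def)
  define d where "d = Dual (1 / s) (- deps x / (2 * s * s * s))"
  have "d * d * x = 1" using s assms
    by (simp add: d_def dual_eq_iff field_simps)
  moreover have "dre d > 0" using s by (simp add: d_def)
  ultimately show ?thesis by blast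
qed

definition lincomb ::
  "('a \<Rightarrow> 'm::comm_monoid_add \<Rightarrow> 'm) \<Rightarrow> ('i::finite \<Rightarrow> 'm) \<Rightarrow> ('i \<Rightarrow> 'a) \<Rightarrow> 'm" where
  "lincomb sc g c = (\<Sum>i\<in>UNIV. sc (c i) (g i))"

context module
begin

lemma lincomb_add: "lincomb scale g c + lincomb scale g d = lincomb scale g (\<lambda>i. c i + d i)"
  by (simp add: lincomb_def scale_left_distrib sum.distrib)

lemma lincomb_diff: "lincomb scale g c - lincomb scale g d = lincomb scale g (\<lambda>i. c i - d i)"
  by (simp add: lincomb_def scale_left_diff_distrib sum_subtractf)

lemma lincomb_scale: "a *s lincomb scale g c = lincomb scale g (\<lambda>i. a * c i)"
  by (simp add: lincomb_def scale_sum_right)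

lemma lincomb_zero: "lincomb scale g (\<lambda>i. 0) = 0"
  by (simp add: lincomb_def)

lemma lincomb_delta: "lincomb scale g (\<lambda>i. if i = k then 1 else 0) = g k"
proof -
  have "lincomb scale g (\<lambda>i. if i = k then 1 else 0) = (\<Sum>i\<in>UNIV. if i = k then g k else 0)"
    unfolding lincomb_def by (rule sum.cong) auto
  then show ?thesis by simp
qed

lemma lincomb_lincomb:
  assumes "\<And>k. b k = lincomb scale g (B k)"
  shows "lincomb scale b c = lincomb scale g (\<lambda>j. \<Sum>k\<in>UNIV. c k * B k j)"
proof -
  have "lincomb scale b c = (\<Sum>k\<in>UNIV. \<Sum>j\<in>UNIV. (c k * B k j) *s g j)"
    by (simp add: lincomb_def assms scale_sum_right)
  also have "\<dots> = (\<Sum>j\<in>UNIV. \<Sum>k\<in>UNIV. (c k * B k j) *s g j)"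
    by (rule sum.swap)
  also have "\<dots> = lincomb scale g (\<lambda>j. \<Sum>k\<in>UNIV. c k * B k j)"
    by (simp add: lincomb_def scale_sum_left)
  finally show ?thesis .
qed

lemma subspace_range_lincomb: "subspace (range (lincomb scale g))"
proof (rule subspaceI)
  show "0 \<in> range (lincomb scale g)"
    using rangeI[of "lincomb scale g" "\<lambda>i. 0"] by (simp only: lincomb_zero)
  show "x + y \<in> range (lincomb scale g)"
    if "x \<in> range (lincomb scale g)" "y \<in> range (lincomb scale g)" for x y
    using that by (auto simp: lincomb_add)
  show "c *s x \<in> range (lincomb scale g)" if "x \<in> range (lincomb scale g)" for c x
    using that by (auto simp: lincomb_scale)
qed

lemma basis_vector_in_range_lincomb: "g k \<in> range (lincomb scale g)"
  using rangeI[of "lincomb scale g" "\<lambda>i. if i = k then 1 else 0"] by (simp only: lincomb_delta)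

end

locale dual_module = module scale
  for scale :: "dual \<Rightarrow> 'm::ab_group_add \<Rightarrow> 'm" (infixr \<open>*s\<close> 75)
begin

lemma dual_basis_iff: "dual_basis scale b \<longleftrightarrow> (\<forall>x. \<exists>!c. x = lincomb scale b c)"
  by (simp add: dual_basis_def lincomb_def)

lemma lincomb_coords:
  assumes "dual_basis scale b"
  shows "lincomb scale b (coords scale b x) = x"
proof -
  have "\<exists>!c. x = lincomb scale b c" using assms by (simp add: dual_basis_iff)
  then have "x = lincomb scale b (THE c. x = lincomb scale b c)" by (rule theI')
  then show ?thesis by (simp add: coords_def lincomb_def)
qed

lemma lincomb_eq_iff:
  assumes "dual_basis scale b"
  shows "lincomb scale b c = lincomb scale b d \<longleftrightarrow> c = d"
proof
  assume eq: "lincomb scale b c = lincomb scale b d"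
  have "\<exists>!e. lincomb scale b c = lincomb scale b e" using assms by (simp add: dual_basis_iff)
  then show "c = d" using eq by auto
qed simp

lemma coords_lincomb:
  assumes b: "dual_basis scale b"
  shows "coords scale b (lincomb scale b c) = c"
  using lincomb_coords[OF b, of "lincomb scale b c"] by (simp add: lincomb_eq_iff[OF b])

lemma coords_inject:
  assumes b: "dual_basis scale b"
  shows "coords scale b x = coords scale b y \<longleftrightarrow> x = y"
  by (metis lincomb_coords[OF b])

lemma coords_diff:
  assumes b: "dual_basis scale b"
  shows "coords scale b (x - y) = (\<lambda>i. coords scale b x i - coords scale b y i)"
  using lincomb_diff[of b "coords scale b x" "coords scale b y"]
  by (simp add: lincomb_coords[OF b] coords_lincomb[OF b])

lemma coords_scale:
  assumes b: "dual_basis scale b"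
  shows "coords scale b (a *s x) = (\<lambda>i. a * coords scale b x i)"
  using lincomb_scale[of a b "coords scale b x"]
  by (simp add: lincomb_coords[OF b] coords_lincomb[OF b])

lemma coords_basis_vector:
  assumes b: "dual_basis scale b"
  shows "coords scale b (b k) = (\<lambda>i. if i = k then 1 else 0)"
  using coords_lincomb[OF b, of "\<lambda>i. if i = k then 1 else 0"] by (simp add: lincomb_delta)

lemma eps_part_iff_coords:
  assumes b: "dual_basis scale b"
  shows "x \<in> eps_part scale \<longleftrightarrow> (\<forall>i. dre (coords scale b x i) = 0)"
proof
  assume "x \<in> eps_part scale"
  then obtain y where "x = \<epsilon>\<^sub>D *s y" by (auto simp: eps_part_def)
  then show "\<forall>i. dre (coords scale b x i) = 0" by (simp add: coords_scale[OF b])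
next
  define c where "c = coords scale b x"
  assume "\<forall>i. dre (coords scale b x i) = 0"
  then have c_eps: "c = (\<lambda>i. \<epsilon>\<^sub>D * Dual (deps (c i)) 0)"
    by (simp add: c_def dual_eq_iff fun_eq_iff)
  have "x = lincomb scale b c"
    unfolding c_def by (rule lincomb_coords[OF b, symmetric])
  also have "\<dots> = lincomb scale b (\<lambda>i. \<epsilon>\<^sub>D * Dual (deps (c i)) 0)"
    using c_eps by (rule arg_cong)
  also have "\<dots> = \<epsilon>\<^sub>D *s lincomb scale b (\<lambda>i. Dual (deps (c i)) 0)"
    by (rule lincomb_scale[symmetric])
  finally show "x \<in> eps_part scale" by (auto simp: eps_part_def)
qed

end

definition orthonormal :: "('m \<Rightarrow> 'm \<Rightarrow> 'a::zero_neq_one) \<Rightarrow> ('i \<Rightarrow> 'm) \<Rightarrow> bool" where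
  "orthonormal sp E \<longleftrightarrow> (\<forall>i j. sp (E i) (E j) = (if i = j then 1 else 0))"

locale dual_scalar_product_module = dual_module scale
  for scale :: "dual \<Rightarrow> 'm::ab_group_add \<Rightarrow> 'm" (infixr \<open>*s\<close> 75) +
  fixes sp :: "'m \<Rightarrow> 'm \<Rightarrow> dual"
  assumes scalar_product: "scalar_product scale sp"
begin

lemma sp_sym: "sp x y = sp y x"
  using scalar_product unfolding scalar_product_def by blast

lemma sp_add_left: "sp (x + y) z = sp x z + sp y z"
  using scalar_product unfolding scalar_product_def by blast

lemma sp_scale_left: "sp (a *s x) y = a * sp x y"
  using scalar_product unfolding scalar_product_def by blast

lemma sp_scale_right: "sp x (a *s y) = a * sp x y"
  by (metis sp_sym sp_scale_left)

lemma sp_diff_left: "sp (x - y) z = sp x z - sp y z"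
  using sp_add_left[of "x - y" y z] by (simp add: algebra_simps)

lemma sp_zero_left: "sp 0 z = 0"
  using sp_scale_left[of 0 0 z] by simp

lemma sp_sum_left: "sp (sum f A) z = (\<Sum>i\<in>A. sp (f i) z)"
  by (induction A rule: infinite_finite_induct) (simp_all add: sp_zero_left sp_add_left)

lemma sp_self_pos:
  assumes "x \<notin> eps_part scale"
  shows "dre (sp x x) > 0"
proof -
  have "dre (sp x x) \<ge> 0" "dre (sp x x) = 0 \<longleftrightarrow> x \<in> eps_part scale"
    using scalar_product unfolding scalar_product_def by blast+
  then show ?thesis using assms by linarith
qed

lemma orthonormal_sp_lincomb:
  assumes "orthonormal sp E"
  shows "sp (lincomb scale E c) (E j) = c j"
proof -
  have "sp (lincomb scale E c) (E j) = (\<Sum>i\<in>UNIV. if i = j then c j else 0)"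
    unfolding lincomb_def sp_sum_left sp_scale_left
    by (rule sum.cong) (use assms in \<open>auto simp: orthonormal_def\<close>)
  then show ?thesis by simp
qed

lemma orthonormal_three_iff:
  "orthonormal sp (E :: 3 \<Rightarrow> 'm) \<longleftrightarrow>
    sp (E 0) (E 0) = 1 \<and> sp (E 1) (E 1) = 1 \<and> sp (E 2) (E 2) = 1 \<and>
    sp (E 1) (E 0) = 0 \<and> sp (E 2) (E 0) = 0 \<and> sp (E 2) (E 1) = 0"
  unfolding orthonormal_def all_three_iff by (auto simp: sp_sym)

lemma unit_multiple_exists:
  assumes "w \<notin> eps_part scale"
  obtains d where "dre d > 0" "sp (d *s w) (d *s w) = 1"
proof -
  obtain d where d: "d * d * sp w w = 1" "dre d > 0"
    using dual_inverse_sqrt_exists sp_self_pos[OF assms] by blast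
  have "sp (d *s w) (d *s w) = 1"
    using d(1) by (simp add: sp_scale_left sp_scale_right algebra_simps)
  then show ?thesis using d(2) that by blast
qed

lemma orthonormal_spanning_dual_basis:
  assumes E: "orthonormal sp E" and b: "dual_basis scale b"
    and span: "\<And>k. b k \<in> range (lincomb scale E)"
  shows "dual_basis scale E"
  unfolding dual_basis_iff
proof
  fix x
  have "\<forall>k. \<exists>c. b k = lincomb scale E c"
    using span by blast
  then obtain B where B: "\<And>k. b k = lincomb scale E (B k)"
    by metis
  have "x = lincomb scale b (coords scale b x)"
    by (rule lincomb_coords[OF b, symmetric])
  also have "\<dots> = lincomb scale E (\<lambda>j. \<Sum>k\<in>UNIV. coords scale b x k * B k j)"
    by (rule lincomb_lincomb[OF B])
  finally have "x = lincomb scale E (\<lambda>j. \<Sum>k\<in>UNIV. coords scale b x k * B k j)" .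
  moreover have "c = d" if "x = lincomb scale E c" "x = lincomb scale E d" for c d
  proof
    fix j
    show "c j = d j"
      using that orthonormal_sp_lincomb[OF E, of c j] orthonormal_sp_lincomb[OF E, of d j] by simp
  qed
  ultimately show "\<exists>!c. x = lincomb scale E c" by blast
qed

lemma gram_schmidt_three:
  assumes b: "dual_basis scale b"
  obtains E :: "3 \<Rightarrow> 'm" and d :: "3 \<Rightarrow> dual" and p10 p20 p21 where
    "orthonormal sp E" "\<And>j. dre (d j) > 0" "E 0 = d 0 *s b 0" "E 1 = d 1 *s (b 1 - p10 *s E 0)"
    "E 2 = d 2 *s (b 2 - p20 *s E 0 - p21 *s E 1)"
proof -
  note C = coords_diff[OF b] coords_scale[OF b] coords_basis_vector[OF b]
  have nonnull: "x \<notin> eps_part scale" if "dre (coords scale b x k) \<noteq> 0" for x k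
    using that eps_part_iff_coords[OF b] by blast
  obtain d0 where d0: "dre d0 > 0" "sp (d0 *s b 0) (d0 *s b 0) = 1"
    using unit_multiple_exists[OF nonnull[of "b 0" 0]] by (auto simp: C)
  define e0 where "e0 = d0 *s b 0"
  define w1 where "w1 = b 1 - sp (b 1) e0 *s e0"
  obtain d1 where d1: "dre d1 > 0" "sp (d1 *s w1) (d1 *s w1) = 1"
    using unit_multiple_exists[OF nonnull[of w1 1]] by (auto simp: C w1_def e0_def)
  define e1 where "e1 = d1 *s w1"
  define w2 where "w2 = b 2 - sp (b 2) e0 *s e0 - sp (b 2) e1 *s e1"
  obtain d2 where d2: "dre d2 > 0" "sp (d2 *s w2) (d2 *s w2) = 1"
    using unit_multiple_exists[OF nonnull[of w2 2]] by (auto simp: C w2_def w1_def e1_def e0_def)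
  define e2 where "e2 = d2 *s w2"
  have sp_e0: "sp e0 e0 = 1" and sp_e1: "sp e1 e1 = 1" and sp_e2: "sp e2 e2 = 1"
    using d0 d1 d2 by (simp_all add: e0_def e1_def e2_def)
  have sp_e1_e0: "sp e1 e0 = 0"
    by (simp add: e1_def w1_def sp_scale_left sp_diff_left sp_e0)
  have sp_e2_e0: "sp e2 e0 = 0"
    by (simp add: e2_def w2_def sp_scale_left sp_diff_left sp_e0 sp_e1_e0)
  have sp_e2_e1: "sp e2 e1 = 0"
    by (simp add: e2_def w2_def sp_scale_left sp_diff_left sp_e1 sp_e1_e0 sp_sym[of e0 e1])
  define E where "E = (\<lambda>i::3. if i = 0 then e0 else if i = 1 then e1 else e2)"
  define d where "d = (\<lambda>i::3. if i = 0 then d0 else if i = 1 then d1 else d2)"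
  have orth: "orthonormal sp E"
    by (simp add: orthonormal_three_iff E_def sp_e0 sp_e1 sp_e2 sp_e1_e0 sp_e2_e0 sp_e2_e1)
  have d_pos: "dre (d j) > 0" for j
    using d0(1) d1(1) d2(1) by (simp add: d_def)
  have "E 0 = d 0 *s b 0" "E 1 = d 1 *s (b 1 - sp (b 1) e0 *s E 0)"
    "E 2 = d 2 *s (b 2 - sp (b 2) e0 *s E 0 - sp (b 2) e1 *s E 1)"
    by (simp_all add: E_def d_def e0_def e1_def e2_def w1_def w2_def)
  with orth d_pos show ?thesis by (rule that)
qed

lemma triangular_orthonormal_basis:
  assumes b: "dual_basis scale b" and E: "orthonormal sp E" and d: "\<And>j. dre (d j) > 0"
    and E0: "E 0 = d 0 *s b 0" and E1: "E 1 = d 1 *s (b 1 - p10 *s E 0)"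
    and E2: "E 2 = d 2 *s (b 2 - p20 *s E 0 - p21 *s E 1)"
  shows "dual_basis scale E" and "same_orientation scale E b"
proof -
  have "d j dvd 1" for j
    using d[of j] by (simp add: dual_dvd_one_iff)
  then have "\<forall>j. \<exists>a. a * d j = 1"
    unfolding dvd_def by (metis mult.commute)
  then obtain a where a: "\<And>j. a j * d j = 1" by metis
  have S: "subspace (range (lincomb scale E))" by (rule subspace_range_lincomb)
  have "b 0 = a 0 *s E 0" "b 1 = a 1 *s E 1 + p10 *s E 0"
    "b 2 = a 2 *s E 2 + p20 *s E 0 + p21 *s E 1"
    using a[of 0] a[of 1] a[of 2] by (simp_all add: E0 E1 E2)
  then have "b k \<in> range (lincomb scale E)" for k
    using three_exhaust[of k] basis_vector_in_range_lincomb[of E]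
    by (auto intro!: subspace_add[OF S] subspace_scale[OF S])
  then show "dual_basis scale E" by (rule orthonormal_spanning_dual_basis[OF E b])
  define A where "A = (\<lambda>j. coords scale b (E j))"
  have "E j = (\<Sum>k\<in>UNIV. A j k *s b k)" for j
    using lincomb_coords[OF b, of "E j"] by (simp add: A_def lincomb_def)
  moreover have "det3 (\<lambda>j k. dre (A j k)) = dre (d 0) * dre (d 1) * dre (d 2)"
    by (subst det3_lower_triangular)
      (simp_all add: A_def E0 E1 E2 coords_diff[OF b] coords_scale[OF b] coords_basis_vector[OF b])
  then have "det3 (\<lambda>j k. dre (A j k)) > 0"
    using d[of 0] d[of 1] d[of 2] by simp
  ultimately show "same_orientation scale E b"
    unfolding same_orientation_def by blast
qed

lemma pos_orthonormal_basis_exists: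
  assumes "is_orientation scale OR"
  shows "\<exists>m. pos_orthonormal_basis scale sp OR m"
proof -
  obtain b where b: "dual_basis scale b"
    and OR: "OR = {b'. dual_basis scale b' \<and> same_orientation scale b' b}"
    using assms unfolding is_orientation_def by blast
  obtain E :: "3 \<Rightarrow> 'm" and d :: "3 \<Rightarrow> dual" and p10 p20 p21
    where E: "orthonormal sp E" and d: "\<And>j. dre (d j) > 0"
      and eqs: "E 0 = d 0 *s b 0" "E 1 = d 1 *s (b 1 - p10 *s E 0)"
      "E 2 = d 2 *s (b 2 - p20 *s E 0 - p21 *s E 1)"
    using gram_schmidt_three[OF b] by blast
  note E_basis = triangular_orthonormal_basis[OF b E d eqs]
  have "pos_orthonormal_basis scale sp OR E"
    using E E_basis by (simp add: pos_orthonormal_basis_def OR orthonormal_def)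
  then show ?thesis by blast
qed

end

definition coord_cross :: "(3 \<Rightarrow> 'a::comm_ring) \<Rightarrow> (3 \<Rightarrow> 'a) \<Rightarrow> 3 \<Rightarrow> 'a" where
  "coord_cross u v = (\<lambda>k. if k = 0 then u 1 * v 2 - u 2 * v 1
                         else if k = 1 then u 2 * v 0 - u 0 * v 2
                         else u 0 * v 1 - u 1 * v 0)"

lemma coord_cross_eq_0_iff:
  fixes u v :: "3 \<Rightarrow> 'a::comm_ring_1"
  assumes unit: "v k dvd 1"
  shows "coord_cross u v = (\<lambda>_. 0) \<longleftrightarrow> (\<exists>l. u = (\<lambda>i. l * v i))"
proof
  assume "coord_cross u v = (\<lambda>_. 0)"
  then have "u 1 * v 2 = u 2 * v 1" "u 2 * v 0 = u 0 * v 2" "u 0 * v 1 = u 1 * v 0"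
    by (simp_all add: coord_cross_def fun_eq_iff all_three_iff)
  then have minors: "u i * v j = u j * v i" for i j
    using three_exhaust[of i] three_exhaust[of j] by (auto simp: mult.commute)
  obtain w where w: "1 = v k * w" using unit by (rule dvdE)
  have "u i = (u k * w) * v i" for i
  proof -
    have "u i = (u i * v k) * w" by (simp add: w[symmetric] mult.assoc)
    also have "\<dots> = (u k * w) * v i" by (simp add: minors[of i k] ac_simps)
    finally show ?thesis .
  qed
  then show "\<exists>l. u = (\<lambda>i. l * v i)" by blast
next
  assume "\<exists>l. u = (\<lambda>i. l * v i)"
  then show "coord_cross u v = (\<lambda>_. 0)" by (auto simp: coord_cross_def fun_eq_iff ac_simps)
qed

lemma cross_prod_eq_lincomb_coord_cross:
  assumes "m = (SOME m. pos_orthonormal_basis sc sp OR m)"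
  shows "cross_prod sc sp OR x y = lincomb sc m (coord_cross (coords sc m x) (coords sc m y))"
  by (simp add: cross_prod_def Let_def assms[symmetric] lincomb_def sum_UNIV_three coord_cross_def)

theorem proposition13:
  fixes sc :: "dual \<Rightarrow> 'm::ab_group_add \<Rightarrow> 'm"
    and sp :: "'m \<Rightarrow> 'm \<Rightarrow> dual"
    and OR :: "(3 \<Rightarrow> 'm) set"
    and z1 z2 :: 'm
  assumes "module sc"
    and "\<exists>b. dual_basis sc b"
    and "scalar_product sc sp"
    and "is_orientation sc OR"
    and "z1 \<notin> eps_part sc"
    and "z2 \<notin> eps_part sc"
  shows "(\<exists>l. z1 = sc l z2) \<longleftrightarrow> cross_prod sc sp OR z1 z2 = 0"
proof -
  interpret dual_scalar_product_module sc sp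
    using assms(1,3) by (simp add: dual_scalar_product_module_def
        dual_scalar_product_module_axioms_def dual_module_def)
  define m where "m = (SOME m. pos_orthonormal_basis sc sp OR m)"
  have m: "dual_basis sc m"
    using someI_ex[OF pos_orthonormal_basis_exists[OF assms(4)]]
    by (simp add: m_def pos_orthonormal_basis_def)
  define u v where "u = coords sc m z1" and "v = coords sc m z2"
  obtain k where k: "v k dvd 1"
    using assms(6) by (auto simp: eps_part_iff_coords[OF m] dual_dvd_one_iff v_def)
  have "(\<exists>l. z1 = sc l z2) \<longleftrightarrow> (\<exists>l. u = (\<lambda>i. l * v i))"
    by (simp add: coords_inject[OF m, symmetric] coords_scale[OF m] u_def v_def)
  also have "\<dots> \<longleftrightarrow> coord_cross u v = (\<lambda>_. 0)"
    using coord_cross_eq_0_iff[where u = u and v = v, OF k] by simp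
  also have "\<dots> \<longleftrightarrow> cross_prod sc sp OR z1 z2 = 0"
    using lincomb_eq_iff[OF m, of "coord_cross u v" "\<lambda>_. 0"]
    by (simp add: cross_prod_eq_lincomb_coord_cross[OF m_def] u_def v_def lincomb_zero)
  finally show ?thesis .
qed

end
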